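(* Let $x\in[0,1)$, $\alpha\in(0,1)$ and $\lambda>0$, and suppose $\alpha<1-\frac{1}{\lambda(1-x)}$. Then the rumor has a positive steady state, i.e. the equation $\theta_1=(1-x)(1-\alpha)\frac{\lambda\theta_1}{1+\lambda\theta_1}$ has a positive solution $\theta_1>0$. This positive steady state is decreasing in $\alpha$ and in $x$ and increasing in $\lambda$, and it does not depend on the prevalence $\theta_0$ of the truth.
   Context: Model: a continuum population of mass $1$; a mass $x\in[0,1]$ of agents are of type $0$ (biased towards the truth, message $m=0$) and a mass $1-x$ are of type $1$ (biased towards the rumor, message $m=1$). In each type, a fraction $\alpha\in(0,1)$ of agents inspect messages. An agent who does not inspect believes (and transmits) only the message matching her type and ignores the other; an inspecting agent believes and transmits the truth upon receiving either message. Each agent has $k$ meetings per unit of time, each transmitting a message with rate $\nu$, and informed agents die at rate $\delta$ and are replaced by uninformed agents; set $\lambda=k\nu/\delta$. Let $\rho^{\alpha}_{0,0},\rho^{1-\alpha}_{0,0},\rho^{\alpha}_{1,0},\rho^{1-\alpha}_{1,1}\in[0,1]$ be respectively the fractions of inspecting type-0 agents believing the truth, non-inspecting type-0 agents believing the truth, inspecting type-1 agents believing the truth, and non-inspecting type-1 agents believing the rumor. The prevalences are $\theta_0=x[\alpha\rho^{\alpha}_{0,0}+(1-\alpha)\rho^{1-\alpha}_{0,0}]+(1-x)\alpha\rho^{\alpha}_{1,0}$ (truth) and $\theta_1=(1-x)(1-\alpha)\rho^{1-\alpha}_{1,1}$ (rumor). The dynamics are $\dot\rho^{\alpha}_{0,0}=x\alpha[(1-\rho^{\alpha}_{0,0})k\nu(\theta_0+\theta_1)-\rho^{\alpha}_{0,0}\delta]$,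 $\dot\rho^{1-\alpha}_{0,0}=x(1-\alpha)[(1-\rho^{1-\alpha}_{0,0})k\nu\theta_0-\rho^{1-\alpha}_{0,0}\delta]$, $\dot\rho^{\alpha}_{1,0}=(1-x)\alpha[(1-\rho^{\alpha}_{1,0})k\nu(\theta_0+\theta_1)-\rho^{\alpha}_{1,0}\delta]$, $\dot\rho^{1-\alpha}_{1,1}=(1-x)(1-\alpha)[(1-\rho^{1-\alpha}_{1,1})k\nu\theta_1-\rho^{1-\alpha}_{1,1}\delta]$. A steady state is a rest point of these dynamics; at a steady state $\rho^{1-\alpha}_{1,1}=\frac{\lambda\theta_1}{1+\lambda\theta_1}$, so the steady-state rumor prevalence solves $\theta_1=(1-x)(1-\alpha)\frac{\lambda\theta_1}{1+\lambda\theta_1}$. *)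

theory Defs
  imports Complex_Main
begin

text \<open>Prevalence of the truth theta_0 and of the rumor theta_1 as functions of the
  four belief fractions (r0a = rho^alpha_{0,0}, r0n = rho^{1-alpha}_{0,0},
  r1a = rho^alpha_{1,0}, r1n = rho^{1-alpha}_{1,1}).\<close>

definition theta0 :: "real \<Rightarrow> real \<Rightarrow> real \<Rightarrow> real \<Rightarrow> real \<Rightarrow> real \<Rightarrow> real" where
  "theta0 x a r0a r0n r1a r1n = x * (a * r0a + (1 - a) * r0n) + (1 - x) * a * r1a"

definition theta1 :: "real \<Rightarrow> real \<Rightarrow> real \<Rightarrow> real \<Rightarrow> real \<Rightarrow> real \<Rightarrow> real" where
  "theta1 x a r0a r0n r1a r1n = (1 - x) * (1 - a) * r1n"

text \<open>Rest point of the dynamics (all four time derivatives vanish).\<close>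

definition rest_point ::
  "real \<Rightarrow> real \<Rightarrow> real \<Rightarrow> real \<Rightarrow> real \<Rightarrow> real \<Rightarrow> real \<Rightarrow> real \<Rightarrow> real \<Rightarrow> bool" where
  "rest_point x a k nu delta r0a r0n r1a r1n \<longleftrightarrow>
     (let t0 = theta0 x a r0a r0n r1a r1n; t1 = theta1 x a r0a r0n r1a r1n in
       x * a * ((1 - r0a) * k * nu * (t0 + t1) - r0a * delta) = 0 \<and>
       x * (1 - a) * ((1 - r0n) * k * nu * t0 - r0n * delta) = 0 \<and>
       (1 - x) * a * ((1 - r1a) * k * nu * (t0 + t1) - r1a * delta) = 0 \<and>
       (1 - x) * (1 - a) * ((1 - r1n) * k * nu * t1 - r1n * delta) = 0)"

definition rumor_ss_eq :: "real \<Rightarrow> real \<Rightarrow> real \<Rightarrow> real \<Rightarrow> bool" where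
  "rumor_ss_eq x a lam t \<longleftrightarrow> t = (1 - x) * (1 - a) * (lam * t / (1 + lam * t))"

text \<open>The positive steady state of the rumor (meaningful when it exists and is unique).\<close>

definition pos_rumor_ss :: "real \<Rightarrow> real \<Rightarrow> real \<Rightarrow> real" where
  "pos_rumor_ss x a lam = (THE t. t > 0 \<and> rumor_ss_eq x a lam t)"

definition admissible :: "real \<Rightarrow> real \<Rightarrow> real \<Rightarrow> bool" where
  "admissible x a lam \<longleftrightarrow> 0 \<le> x \<and> x < 1 \<and> 0 < a \<and> a < 1 \<and> 0 < lam \<and>
     a < 1 - 1 / (lam * (1 - x))"

end

theory Submission
  imports Defs
begin

text \<open>For \<open>\<theta> > 0\<close> the steady-state equation cancels to the linear equation
  \<open>1 + \<lambda>\<theta> = (1 - x)(1 - \<alpha>)\<lambda>\<close>, so the only positive steady state is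
  \<open>(1 - x)(1 - \<alpha>) - 1/\<lambda>\<close>; the hypothesis on \<open>\<alpha>\<close> says precisely that it is positive, and
  its monotonicity in \<open>\<alpha>\<close>, \<open>x\<close> and \<open>\<lambda>\<close> can be read off. At a rest point the last of the
  four equations involves only \<open>\<rho>\<^sub>1\<^sub>,\<^sub>1\<close> and \<open>\<theta>\<^sub>1\<close>; it gives
  \<open>\<rho>\<^sub>1\<^sub>,\<^sub>1 = \<lambda>\<theta>\<^sub>1/(1 + \<lambda>\<theta>\<^sub>1)\<close>, hence the steady-state equation, whatever \<open>\<theta>\<^sub>0\<close> is.\<close>

lemma rumor_ss_eq_pos_iff:
  assumes "lam > 0" and "t > 0"
  shows "rumor_ss_eq x a lam t \<longleftrightarrow> t = (1 - x) * (1 - a) - 1 / lam"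
proof -
  have "1 + lam * t > 0"
    using assms by (simp add: add_pos_pos)
  then have "rumor_ss_eq x a lam t \<longleftrightarrow> t * (1 + lam * t) = t * ((1 - x) * (1 - a) * lam)"
    unfolding rumor_ss_eq_def by (simp add: field_simps)
  also have "\<dots> \<longleftrightarrow> 1 + lam * t = (1 - x) * (1 - a) * lam"
    using \<open>t > 0\<close> by simp
  also have "\<dots> \<longleftrightarrow> t = (1 - x) * (1 - a) - 1 / lam"
    using \<open>lam > 0\<close> by (auto simp: field_simps)
  finally show ?thesis .
qed

lemma admissible_imp_ss_value_pos:
  assumes "admissible x a lam"
  shows "(1 - x) * (1 - a) - 1 / lam > 0"
proof -
  from assms have "1 - x > 0" and "lam > 0" and "1 / (lam * (1 - x)) < 1 - a"
    by (auto simp: admissible_def)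
  then have "1 / (lam * (1 - x)) * (1 - x) < (1 - a) * (1 - x)"
    by (intro mult_strict_right_mono)
  then show ?thesis
    using \<open>1 - x > 0\<close> by (simp add: mult.commute)
qed

lemma admissible_pos_rumor_ss_eq_iff:
  assumes "admissible x a lam"
  shows "t > 0 \<and> rumor_ss_eq x a lam t \<longleftrightarrow> t = (1 - x) * (1 - a) - 1 / lam"
proof -
  have "lam > 0"
    using assms by (simp add: admissible_def)
  then show ?thesis
    using rumor_ss_eq_pos_iff admissible_imp_ss_value_pos[OF assms] by auto
qed

lemma pos_rumor_ss_unique:
  assumes "admissible x a lam"
  shows "\<exists>!t. t > 0 \<and> rumor_ss_eq x a lam t"
  by (simp add: admissible_pos_rumor_ss_eq_iff[OF assms])

lemma pos_rumor_ss_eq: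
  assumes "admissible x a lam"
  shows "pos_rumor_ss x a lam = (1 - x) * (1 - a) - 1 / lam"
  by (simp add: pos_rumor_ss_def admissible_pos_rumor_ss_eq_iff[OF assms])

lemma rest_point_imp_rumor_ss_eq:
  assumes "rest_point x a k nu delta r0a r0n r1a r1n"
    and "delta \<noteq> 0" and "lam = k * nu / delta"
  shows "rumor_ss_eq x a lam (theta1 x a r0a r0n r1a r1n)"
proof (cases "(1 - x) * (1 - a) = 0")
  case True
  then show ?thesis
    by (simp add: rumor_ss_eq_def theta1_def True)
next
  case False
  define t where "t = theta1 x a r0a r0n r1a r1n"
  have "k * nu = delta * lam"
    using assms(2,3) by simp
  moreover have "(1 - r1n) * (k * nu) * t = r1n * delta"
    using assms(1) False unfolding rest_point_def Let_def t_def by (simp add: mult.assoc)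
  ultimately have "delta * ((1 - r1n) * lam * t) = delta * r1n"
    by (simp add: algebra_simps)
  then have "(1 - r1n) * lam * t = r1n"
    using assms(2) by simp
  then have balance: "r1n * (1 + lam * t) = lam * t"
    by (simp add: ring_distribs)
  then have "1 + lam * t \<noteq> 0"
    by auto
  then have "r1n = lam * t / (1 + lam * t)"
    using balance by (simp add: field_simps)
  then show ?thesis
    by (simp add: rumor_ss_eq_def t_def theta1_def)
qed

theorem lemma1:
  fixes x a lam :: real
  assumes "admissible x a lam"
  shows "(\<exists>!t. t > 0 \<and> rumor_ss_eq x a lam t)
    \<and> (\<forall>a'. admissible x a' lam \<and> a < a' \<longrightarrow> pos_rumor_ss x a' lam < pos_rumor_ss x a lam)
    \<and> (\<forall>x'. admissible x' a lam \<and> x < x' \<longrightarrow> pos_rumor_ss x' a lam < pos_rumor_ss x a lam)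
    \<and> (\<forall>lam'. admissible x a lam' \<and> lam < lam' \<longrightarrow> pos_rumor_ss x a lam < pos_rumor_ss x a lam')
    \<and> (\<forall>k nu delta r0a r0n r1a r1n.
         0 < k \<and> 0 < nu \<and> 0 < delta \<and> lam = k * nu / delta \<and>
         r0a \<in> {0..1} \<and> r0n \<in> {0..1} \<and> r1a \<in> {0..1} \<and> r1n \<in> {0..1} \<and>
         rest_point x a k nu delta r0a r0n r1a r1n \<and>
         theta1 x a r0a r0n r1a r1n > 0
         \<longrightarrow> theta1 x a r0a r0n r1a r1n = pos_rumor_ss x a lam)"
proof (intro conjI allI impI)
  have bounds: "x < 1" "a < 1" and "0 < lam"
    using assms by (auto simp: admissible_def)
  show "\<exists>!t. t > 0 \<and> rumor_ss_eq x a lam t"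
    using pos_rumor_ss_unique[OF assms] .
  show "pos_rumor_ss x a' lam < pos_rumor_ss x a lam" if "admissible x a' lam \<and> a < a'" for a'
    using that bounds by (simp add: pos_rumor_ss_eq assms)
  show "pos_rumor_ss x' a lam < pos_rumor_ss x a lam" if "admissible x' a lam \<and> x < x'" for x'
    using that bounds by (simp add: pos_rumor_ss_eq assms)
  show "pos_rumor_ss x a lam < pos_rumor_ss x a lam'" if "admissible x a lam' \<and> lam < lam'" for lam'
    using that bounds \<open>0 < lam\<close> by (simp add: pos_rumor_ss_eq assms frac_less2)
  fix k nu delta r0a r0n r1a r1n :: real
  assume "0 < k \<and> 0 < nu \<and> 0 < delta \<and> lam = k * nu / delta \<and>
         r0a \<in> {0..1} \<and> r0n \<in> {0..1} \<and> r1a \<in> {0..1} \<and> r1n \<in> {0..1} \<and>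
         rest_point x a k nu delta r0a r0n r1a r1n \<and>
         theta1 x a r0a r0n r1a r1n > 0"
  then have "rest_point x a k nu delta r0a r0n r1a r1n" and "delta \<noteq> 0"
    and "lam = k * nu / delta" and "theta1 x a r0a r0n r1a r1n > 0"
    by blast+
  from this(1-3) have "rumor_ss_eq x a lam (theta1 x a r0a r0n r1a r1n)"
    by (rule rest_point_imp_rumor_ss_eq)
  with \<open>theta1 x a r0a r0n r1a r1n > 0\<close> show "theta1 x a r0a r0n r1a r1n = pos_rumor_ss x a lam"
    by (simp add: rumor_ss_eq_pos_iff[OF \<open>0 < lam\<close>] pos_rumor_ss_eq[OF assms])
qed

end
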